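(* For any $(2^{nR_1},2^{nR_2},n)$ code (with deterministic feedback encoders $x_{ki}=\phi_{ki}(w_k,z_k^{i-1})$) for the state-dependent discrete memoryless MAC with generalized feedback, with independent messages $W_1,W_2$, letting $Z_i=(Z_{1i},Z_{2i})$ and $Z^{i-1}=(Z_1,\dots,Z_{i-1})$, $$\sum_{i=1}^nI(X_{1i};X_{2i}\mid Z^{i-1})\le\sum_{i=1}^nI(X_{1i};X_{2i}\mid Z_i,Z^{i-1}).$$
   Context: Model: finite alphabets; states $S_i$ i.i.d. $\sim P_S$ independent of the messages; memoryless channel $P_{YZ_1Z_2|X_1X_2S}$ producing $(Y_i,Z_{1i},Z_{2i})$ from $(X_{1i},X_{2i},S_i)$; encoder $k$ maps its message $w_k$ and its past feedback $z_k^{i-1}=(z_{k1},\dots,z_{k,i-1})$ to $x_{ki}$. *)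

theory Defs
  imports "HOL-Probability.Probability"
begin

definition cmi :: "'o pmf \<Rightarrow> ('o \<Rightarrow> 'a) \<Rightarrow> ('o \<Rightarrow> 'b) \<Rightarrow> ('o \<Rightarrow> 'c) \<Rightarrow> real" where
  "cmi p X Y Z =
    (let pj  = pmf (map_pmf (\<lambda>\<omega>. (X \<omega>, Y \<omega>, Z \<omega>)) p);
         pz  = pmf (map_pmf Z p);
         pxz = pmf (map_pmf (\<lambda>\<omega>. (X \<omega>, Z \<omega>)) p);
         pyz = pmf (map_pmf (\<lambda>\<omega>. (Y \<omega>, Z \<omega>)) p)
     in (\<Sum>(x,y,z) \<in> (\<lambda>\<omega>. (X \<omega>, Y \<omega>, Z \<omega>)) ` set_pmf p.
           pj (x,y,z) * log 2 (pj (x,y,z) * pz z / (pxz (x,z) * pyz (y,z)))))"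

type_synonym ('x1,'x2,'s,'y,'z1,'z2) step = "'x1 \<times> 'x2 \<times> 's \<times> 'y \<times> 'z1 \<times> 'z2"

definition st_x1 :: "('x1,'x2,'s,'y,'z1,'z2) step \<Rightarrow> 'x1" where "st_x1 t = fst t"
definition st_x2 :: "('x1,'x2,'s,'y,'z1,'z2) step \<Rightarrow> 'x2" where "st_x2 t = fst (snd t)"
definition st_z1 :: "('x1,'x2,'s,'y,'z1,'z2) step \<Rightarrow> 'z1" where "st_z1 t = fst (snd (snd (snd (snd t))))"
definition st_z2 :: "('x1,'x2,'s,'y,'z1,'z2) step \<Rightarrow> 'z2" where "st_z2 t = snd (snd (snd (snd (snd t))))"

text \<open>Time indices are 0-based: at time i the encoder k uses its message and the
  list of its past feedback symbols z_k0..z_k(i-1).\<close>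
fun traj :: "'s pmf \<Rightarrow> ('x1 \<Rightarrow> 'x2 \<Rightarrow> 's \<Rightarrow> ('y \<times> 'z1 \<times> 'z2) pmf)
   \<Rightarrow> (nat \<Rightarrow> 'w1 \<Rightarrow> 'z1 list \<Rightarrow> 'x1) \<Rightarrow> (nat \<Rightarrow> 'w2 \<Rightarrow> 'z2 list \<Rightarrow> 'x2)
   \<Rightarrow> 'w1 \<Rightarrow> 'w2 \<Rightarrow> nat \<Rightarrow> ('x1,'x2,'s,'y,'z1,'z2) step list pmf" where
  "traj PS ch \<phi>1 \<phi>2 w1 w2 0 = return_pmf []"
| "traj PS ch \<phi>1 \<phi>2 w1 w2 (Suc k) =
     bind_pmf (traj PS ch \<phi>1 \<phi>2 w1 w2 k) (\<lambda>h.
     bind_pmf PS (\<lambda>s.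
       let x1 = \<phi>1 k w1 (map st_z1 h); x2 = \<phi>2 k w2 (map st_z2 h) in
       map_pmf (\<lambda>(y,z1,z2). h @ [(x1,x2,s,y,z1,z2)]) (ch x1 x2 s)))"

definition code_pmf :: "'w1 set \<Rightarrow> 'w2 set \<Rightarrow> 's pmf \<Rightarrow> ('x1 \<Rightarrow> 'x2 \<Rightarrow> 's \<Rightarrow> ('y \<times> 'z1 \<times> 'z2) pmf)
   \<Rightarrow> (nat \<Rightarrow> 'w1 \<Rightarrow> 'z1 list \<Rightarrow> 'x1) \<Rightarrow> (nat \<Rightarrow> 'w2 \<Rightarrow> 'z2 list \<Rightarrow> 'x2) \<Rightarrow> nat
   \<Rightarrow> ('w1 \<times> 'w2 \<times> ('x1,'x2,'s,'y,'z1,'z2) step list) pmf" where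
  "code_pmf W1 W2 PS ch \<phi>1 \<phi>2 n =
     bind_pmf (pmf_of_set W1) (\<lambda>w1. bind_pmf (pmf_of_set W2) (\<lambda>w2.
       map_pmf (\<lambda>h. (w1, w2, h)) (traj PS ch \<phi>1 \<phi>2 w1 w2 n)))"

definition rvX1 :: "nat \<Rightarrow> 'w1 \<times> 'w2 \<times> ('x1,'x2,'s,'y,'z1,'z2) step list \<Rightarrow> 'x1" where
  "rvX1 i \<omega> = st_x1 (snd (snd \<omega>) ! i)"
definition rvX2 :: "nat \<Rightarrow> 'w1 \<times> 'w2 \<times> ('x1,'x2,'s,'y,'z1,'z2) step list \<Rightarrow> 'x2" where
  "rvX2 i \<omega> = st_x2 (snd (snd \<omega>) ! i)"
definition rvZ :: "nat \<Rightarrow> 'w1 \<times> 'w2 \<times> ('x1,'x2,'s,'y,'z1,'z2) step list \<Rightarrow> 'z1 \<times> 'z2" where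
  "rvZ i \<omega> = (st_z1 (snd (snd \<omega>) ! i), st_z2 (snd (snd \<omega>) ! i))"
text \<open>Z^{i-1} in 1-based notation: the feedback pairs strictly before time i.\<close>
definition rvZpast :: "nat \<Rightarrow> 'w1 \<times> 'w2 \<times> ('x1,'x2,'s,'y,'z1,'z2) step list \<Rightarrow> ('z1 \<times> 'z2) list" where
  "rvZpast i \<omega> = map (\<lambda>t. (st_z1 t, st_z2 t)) (take i (snd (snd \<omega>)))"

end

theory Submission
  imports Defs
begin

text \<open>Dependence balance: put \<open>a\<^sub>k = I(W\<^sub>1;W\<^sub>2|Z\<^sup>k)\<close>. Since \<open>X\<^sub>k\<^sub>i\<close> is a function of
  \<open>(W\<^sub>k, Z\<^sup>i\<^sup>-\<^sup>1)\<close> and \<open>Z\<^sub>i\<close> depends on \<open>(W\<^sub>1, W\<^sub>2, Z\<^sup>i\<^sup>-\<^sup>1)\<close> only through \<open>(X\<^sub>1\<^sub>i, X\<^sub>2\<^sub>i)\<close>,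
  the data processing inequality \<open>I(W\<^sub>k;Z\<^sub>i|X\<^sub>k\<^sub>i,Z\<^sup>i\<^sup>-\<^sup>1) \<ge> 0\<close> for both encoders gives
  \<open>a\<^sub>i - a\<^sub>i\<^sub>-\<^sub>1 \<le> I(X\<^sub>1\<^sub>i;X\<^sub>2\<^sub>i|Z\<^sub>i,Z\<^sup>i\<^sup>-\<^sup>1) - I(X\<^sub>1\<^sub>i;X\<^sub>2\<^sub>i|Z\<^sup>i\<^sup>-\<^sup>1)\<close>.
  Summing telescopes to \<open>a\<^sub>n - a\<^sub>0\<close>, where \<open>a\<^sub>0 = 0\<close> by independence of the messages
  and \<open>a\<^sub>n \<ge> 0\<close>.\<close>

section \<open>Entropy of finitely supported distributions\<close>

definition pmf_entropy :: "'a pmf \<Rightarrow> real" where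
  "pmf_entropy r = - (\<Sum>x\<in>set_pmf r. pmf r x * log 2 (pmf r x))"

lemma sum_set_pmf_map_pmf:
  assumes "finite (set_pmf q)"
  shows "(\<Sum>a\<in>set_pmf q. pmf q a * g (f a)) = (\<Sum>b\<in>set_pmf (map_pmf f q). pmf (map_pmf f q) b * g b)"
proof -
  have "(\<Sum>a\<in>set_pmf q. pmf q a * g (f a)) = (LINT a|q. g (f a))"
    using assms by (simp add: integral_measure_pmf_real mult.commute)
  also have "\<dots> = (LINT b|map_pmf f q. g b)"
    by simp
  also have "\<dots> = (\<Sum>b\<in>set_pmf (map_pmf f q). pmf (map_pmf f q) b * g b)"
    using assms by (subst integral_measure_pmf_real) (auto simp: mult.commute)
  finally show ?thesis .
qed

lemma pmf_entropy_map_inj: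
  "inj_on f (set_pmf r) \<Longrightarrow> pmf_entropy (map_pmf f r) = pmf_entropy r"
  unfolding pmf_entropy_def by (simp add: sum.reindex pmf_map_inj)

lemma pmf_entropy_map_cong_fibres:
  assumes "\<And>\<omega> \<omega>'. \<omega> \<in> set_pmf p \<Longrightarrow> \<omega>' \<in> set_pmf p \<Longrightarrow> F \<omega> = F \<omega>' \<longleftrightarrow> G \<omega> = G \<omega>'"
  shows "pmf_entropy (map_pmf F p) = pmf_entropy (map_pmf G p)"
proof -
  define f where "f v = G (SOME \<omega>. \<omega> \<in> set_pmf p \<and> F \<omega> = v)" for v
  have f_F: "f (F \<omega>) = G \<omega>" if "\<omega> \<in> set_pmf p" for \<omega>
  proof -
    have "\<exists>\<omega>'. \<omega>' \<in> set_pmf p \<and> F \<omega>' = F \<omega>"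
      using that by blast
    then show ?thesis
      unfolding f_def by (rule someI2_ex) (use assms that in blast)
  qed
  have "map_pmf G p = map_pmf f (map_pmf F p)"
    by (simp add: map_pmf_comp f_F cong: map_pmf_cong)
  moreover have "inj_on f (set_pmf (map_pmf F p))"
    by (auto simp: inj_on_def f_F assms)
  ultimately show ?thesis
    by (simp add: pmf_entropy_map_inj)
qed

lemma pmf_entropy_return_pmf [simp]: "pmf_entropy (return_pmf x) = 0"
  by (simp add: pmf_entropy_def)

lemma pmf_bind_Pair:
  "pmf (bind_pmf q (\<lambda>a. map_pmf (Pair a) (K a))) (a, d) = pmf q a * pmf (K a) d"
proof -
  have "pmf (map_pmf (Pair a') (K a')) (a, d) = (if a' = a then pmf (K a) d else 0)" for a'
    by (cases "a' = a") (auto simp: pmf_map_inj' inj_on_def pmf_eq_0_set_pmf)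
  then have "pmf (bind_pmf q (\<lambda>a. map_pmf (Pair a) (K a))) (a, d)
      = (LINT a'|q. (if a' = a then pmf (K a) d else 0))"
    by (simp add: pmf_bind)
  also have "\<dots> = pmf q a * pmf (K a) d"
    by (subst integral_measure_pmf_real[where A="{a}"]) (auto split: if_splits)
  finally show ?thesis .
qed

lemma pmf_entropy_chain_rule:
  assumes fin_q: "finite (set_pmf q)" and fin_K: "\<And>a. a \<in> set_pmf q \<Longrightarrow> finite (set_pmf (K a))"
  shows "pmf_entropy (bind_pmf q (\<lambda>a. map_pmf (Pair a) (K a)))
           = pmf_entropy q + (\<Sum>a\<in>set_pmf q. pmf q a * pmf_entropy (K a))"
proof -
  let ?l = "\<lambda>a d. pmf q a * pmf (K a) d * log 2 (pmf q a * pmf (K a) d)"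
  have fibre: "(\<Sum>d\<in>set_pmf (K a). ?l a d) = pmf q a * log 2 (pmf q a) - pmf q a * pmf_entropy (K a)"
    if a: "a \<in> set_pmf q" for a
  proof -
    have "(\<Sum>d\<in>set_pmf (K a). ?l a d)
        = (\<Sum>d\<in>set_pmf (K a). pmf q a * log 2 (pmf q a) * pmf (K a) d
                               + pmf q a * (pmf (K a) d * log 2 (pmf (K a) d)))"
      using a by (intro sum.cong refl) (auto simp: log_mult pmf_positive algebra_simps)
    also have "\<dots> = pmf q a * log 2 (pmf q a) * (\<Sum>d\<in>set_pmf (K a). pmf (K a) d)
                    + pmf q a * (\<Sum>d\<in>set_pmf (K a). pmf (K a) d * log 2 (pmf (K a) d))"
      by (simp add: sum.distrib sum_distrib_left)
    also have "(\<Sum>d\<in>set_pmf (K a). pmf (K a) d) = 1"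
      using fin_K[OF a] by (simp add: sum_pmf_eq_1)
    finally show ?thesis
      by (simp add: pmf_entropy_def)
  qed
  have "pmf_entropy (bind_pmf q (\<lambda>a. map_pmf (Pair a) (K a)))
      = - (\<Sum>(a,d)\<in>Sigma (set_pmf q) (\<lambda>a. set_pmf (K a)). ?l a d)"
    unfolding pmf_entropy_def
    by (intro arg_cong[where f=uminus] sum.cong) (auto simp: pmf_bind_Pair)
  also have "\<dots> = - (\<Sum>a\<in>set_pmf q. \<Sum>d\<in>set_pmf (K a). ?l a d)"
    using fin_q fin_K by (subst sum.Sigma) auto
  also have "\<dots> = - (\<Sum>a\<in>set_pmf q. pmf q a * log 2 (pmf q a) - pmf q a * pmf_entropy (K a))"
    by (simp add: fibre)
  also have "\<dots> = pmf_entropy q + (\<Sum>a\<in>set_pmf q. pmf q a * pmf_entropy (K a))"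
    by (simp add: pmf_entropy_def sum_subtractf sum.distrib sum_negf)
  finally show ?thesis .
qed

lemma pmf_entropy_pair_pmf:
  "finite (set_pmf A) \<Longrightarrow> finite (set_pmf B) \<Longrightarrow>
     pmf_entropy (pair_pmf A B) = pmf_entropy A + pmf_entropy B"
  by (simp add: pair_pmf_def map_pmf_def[symmetric] pmf_entropy_chain_rule
      sum_distrib_right[symmetric] sum_pmf_eq_1)

text \<open>If \<open>D\<close> depends on \<open>A\<close> only through \<open>h A\<close>, then \<open>H(D|A) = H(D|h A)\<close>.\<close>
lemma pmf_entropy_Markov:
  fixes q :: "'a pmf" and h :: "'a \<Rightarrow> 'b" and L :: "'b \<Rightarrow> 'd pmf"
  assumes fin_q: "finite (set_pmf q)" and fin_L: "\<And>b. finite (set_pmf (L b))"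
  defines "J \<equiv> bind_pmf q (\<lambda>a. map_pmf (Pair a) (L (h a)))"
  shows "pmf_entropy J - pmf_entropy q
           = pmf_entropy (map_pmf (\<lambda>(a,d). (h a, d)) J) - pmf_entropy (map_pmf h q)"
proof -
  have "map_pmf (\<lambda>(a,d). (h a, d)) J = bind_pmf (map_pmf h q) (\<lambda>b. map_pmf (Pair b) (L b))"
    by (simp add: J_def map_bind_pmf bind_map_pmf map_pmf_comp)
  moreover have "finite (set_pmf (map_pmf h q))"
    using fin_q by simp
  ultimately show ?thesis
    unfolding J_def using sum_set_pmf_map_pmf[OF fin_q, of "\<lambda>b. pmf_entropy (L b)" h]
    by (simp add: pmf_entropy_chain_rule[OF fin_q fin_L] pmf_entropy_chain_rule[OF _ fin_L])
qed

section \<open>Conditional mutual information\<close>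

lemma cmi_nonneg:
  fixes p :: "'a pmf"
  assumes fin: "finite (set_pmf p)"
  shows "0 \<le> cmi p X Y Z"
proof -
  define M where "M = restrict_space (measure_pmf p) (set_pmf p)"
  interpret information_space M 2
  proof -
    have "prob_space M"
      unfolding M_def
      by (intro prob_space_restrict_space measure_pmf.emeasure_eq_1_AE) (auto simp: AE_measure_pmf_iff)
    then show "information_space M 2"
      by (simp add: information_space_def information_space_axioms_def)
  qed
  have space: "space M = set_pmf p"
    by (simp add: M_def space_restrict_space)
  have sets: "sets M = Pow (set_pmf p)"
    by (auto simp: M_def sets_restrict_space)
  have measure: "measure M (A \<inter> space M) = measure_pmf.prob p A" for A
    unfolding M_def
    by (subst measure_restrict_space) (auto simp: space_restrict_space measure_Int_set_pmf)
  have simple: "simple_function M F" for F :: "'a \<Rightarrow> _"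
    unfolding simple_function_def using fin by (auto simp: space sets)
  have distributed: "simple_distributed M F (pmf (map_pmf F p))" for F :: "'a \<Rightarrow> _"
    by (rule simple_distributedI[OF simple]) (auto simp: pmf_map measure)
  have "0 \<le> conditional_mutual_information 2 (count_space (X ` space M))
      (count_space (Y ` space M)) (count_space (Z ` space M)) X Y Z"
    by (rule conditional_mutual_information_nonneg[OF simple simple simple])
  also have "\<dots> = cmi p X Y Z"
    by (subst conditional_mutual_information_eq[OF distributed distributed distributed distributed])
      (auto simp: cmi_def Let_def space field_simps intro!: sum.cong)
  finally show ?thesis .
qed

lemma cmi_eq_entropies:
  fixes p :: "'a pmf" and X :: "'a \<Rightarrow> 'b" and Y :: "'a \<Rightarrow> 'c" and Z :: "'a \<Rightarrow> 'd"
  assumes fin: "finite (set_pmf p)"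
  shows "cmi p X Y Z = pmf_entropy (map_pmf (\<lambda>\<omega>. (X \<omega>, Z \<omega>)) p) + pmf_entropy (map_pmf (\<lambda>\<omega>. (Y \<omega>, Z \<omega>)) p)
           - pmf_entropy (map_pmf (\<lambda>\<omega>. (X \<omega>, Y \<omega>, Z \<omega>)) p) - pmf_entropy (map_pmf Z p)"
proof -
  define J where "J = map_pmf (\<lambda>\<omega>. (X \<omega>, Y \<omega>, Z \<omega>)) p"
  define pr_z pr_xz pr_yz where "pr_z = (\<lambda>(x::'b, y::'c, z::'d). z)"
    and "pr_xz = (\<lambda>(x::'b, y::'c, z::'d). (x, z))" and "pr_yz = (\<lambda>(x::'b, y::'c, z::'d). (y, z))"
  have fin_J: "finite (set_pmf J)"
    using fin by (simp add: J_def)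
  have marginals: "map_pmf Z p = map_pmf pr_z J" "map_pmf (\<lambda>\<omega>. (X \<omega>, Z \<omega>)) p = map_pmf pr_xz J"
    "map_pmf (\<lambda>\<omega>. (Y \<omega>, Z \<omega>)) p = map_pmf pr_yz J"
    by (simp_all add: J_def pr_z_def pr_xz_def pr_yz_def map_pmf_comp)
  let ?log_pmf = "\<lambda>r v. log 2 (pmf r v)"
  have pointwise: "pmf J t * log 2 (pmf J t * pmf (map_pmf pr_z J) z
          / (pmf (map_pmf pr_xz J) (x, z) * pmf (map_pmf pr_yz J) (y, z)))
        = pmf J t * (?log_pmf J t + ?log_pmf (map_pmf pr_z J) (pr_z t)
          - ?log_pmf (map_pmf pr_xz J) (pr_xz t) - ?log_pmf (map_pmf pr_yz J) (pr_yz t))"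
    if "t \<in> set_pmf J" "t = (x, y, z)" for t x y z
  proof -
    have "0 < pmf J t" "0 < pmf (map_pmf pr_z J) (pr_z t)"
      "0 < pmf (map_pmf pr_xz J) (pr_xz t)" "0 < pmf (map_pmf pr_yz J) (pr_yz t)"
      using that(1) by (simp_all add: pmf_positive)
    then show ?thesis
      using that(2) by (simp add: pr_z_def pr_xz_def pr_yz_def log_mult log_divide)
  qed
  have "(\<lambda>\<omega>. (X \<omega>, Y \<omega>, Z \<omega>)) ` set_pmf p = set_pmf J"
    by (simp add: J_def)
  then have "cmi p X Y Z = (\<Sum>t\<in>set_pmf J. pmf J t * (?log_pmf J t + ?log_pmf (map_pmf pr_z J) (pr_z t)
      - ?log_pmf (map_pmf pr_xz J) (pr_xz t) - ?log_pmf (map_pmf pr_yz J) (pr_yz t)))"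
    unfolding cmi_def Let_def J_def[symmetric] marginals
    by (intro sum.cong) (auto simp: pointwise)
  also have "\<dots> = - pmf_entropy J - pmf_entropy (map_pmf pr_z J)
      + pmf_entropy (map_pmf pr_xz J) + pmf_entropy (map_pmf pr_yz J)"
    unfolding pmf_entropy_def
    by (simp add: algebra_simps sum.distrib sum_subtractf
        sum_set_pmf_map_pmf[OF fin_J, of "?log_pmf (map_pmf _ J)"])
  finally show ?thesis
    by (simp add: marginals J_def)
qed

lemma cmi_cong_fibres:
  assumes fin: "finite (set_pmf p)"
    and "\<And>\<omega> \<omega>'. \<omega> \<in> set_pmf p \<Longrightarrow> \<omega>' \<in> set_pmf p \<Longrightarrow> Z \<omega> = Z \<omega>' \<longleftrightarrow> Z' \<omega> = Z' \<omega>'"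
  shows "cmi p X Y Z = cmi p X Y Z'"
proof -
  have "pmf_entropy (map_pmf (\<lambda>\<omega>. (X \<omega>, Z \<omega>)) p) = pmf_entropy (map_pmf (\<lambda>\<omega>. (X \<omega>, Z' \<omega>)) p)"
    "pmf_entropy (map_pmf (\<lambda>\<omega>. (Y \<omega>, Z \<omega>)) p) = pmf_entropy (map_pmf (\<lambda>\<omega>. (Y \<omega>, Z' \<omega>)) p)"
    "pmf_entropy (map_pmf (\<lambda>\<omega>. (X \<omega>, Y \<omega>, Z \<omega>)) p) = pmf_entropy (map_pmf (\<lambda>\<omega>. (X \<omega>, Y \<omega>, Z' \<omega>)) p)"
    "pmf_entropy (map_pmf Z p) = pmf_entropy (map_pmf Z' p)"
    by (rule pmf_entropy_map_cong_fibres, simp add: assms(2))+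
  then show ?thesis
    by (simp add: cmi_eq_entropies[OF fin])
qed

lemma cmi_independent_const_eq_0:
  assumes fin: "finite (set_pmf p)"
    and indep: "map_pmf (\<lambda>\<omega>. (X \<omega>, Y \<omega>)) p = pair_pmf (map_pmf X p) (map_pmf Y p)"
    and const: "\<And>\<omega>. Z \<omega> = c"
  shows "cmi p X Y Z = 0"
proof -
  have "pmf_entropy (map_pmf (\<lambda>\<omega>. (X \<omega>, Z \<omega>)) p) = pmf_entropy (map_pmf X p)"
    "pmf_entropy (map_pmf (\<lambda>\<omega>. (Y \<omega>, Z \<omega>)) p) = pmf_entropy (map_pmf Y p)"
    "pmf_entropy (map_pmf (\<lambda>\<omega>. (X \<omega>, Y \<omega>, Z \<omega>)) p) = pmf_entropy (map_pmf (\<lambda>\<omega>. (X \<omega>, Y \<omega>)) p)"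
    by (rule pmf_entropy_map_cong_fibres, simp add: const)+
  moreover have "map_pmf Z p = return_pmf c"
    using const by (simp add: map_pmf_const[symmetric] cong: map_pmf_cong)
  ultimately show ?thesis
    using fin by (simp add: cmi_eq_entropies indep pmf_entropy_pair_pmf)
qed

text \<open>The hypothesis \<open>Markov\<close> says \<open>H(D|M\<^sub>1,M\<^sub>2,C) = H(D|X\<^sub>1,X\<^sub>2,C)\<close>, i.e. \<open>D\<close> depends on the
  messages only through the inputs. The proof adds the data processing inequalities
  \<open>I(M\<^sub>k;D|X\<^sub>k,C) \<ge> 0\<close>.\<close>
lemma cmi_increment_le_of_encoders:
  fixes p :: "'a pmf"
  assumes fin: "finite (set_pmf p)"
    and enc: "\<And>\<omega>. \<omega> \<in> set_pmf p \<Longrightarrow> X1 \<omega> = f (M1 \<omega>) (C \<omega>) \<and> X2 \<omega> = g (M2 \<omega>) (C \<omega>)"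
    and Markov: "pmf_entropy (map_pmf (\<lambda>\<omega>. (M1 \<omega>, M2 \<omega>, D \<omega>, C \<omega>)) p) - pmf_entropy (map_pmf (\<lambda>\<omega>. (M1 \<omega>, M2 \<omega>, C \<omega>)) p)
      = pmf_entropy (map_pmf (\<lambda>\<omega>. (X1 \<omega>, X2 \<omega>, D \<omega>, C \<omega>)) p) - pmf_entropy (map_pmf (\<lambda>\<omega>. (X1 \<omega>, X2 \<omega>, C \<omega>)) p)"
  shows "cmi p M1 M2 (\<lambda>\<omega>. (D \<omega>, C \<omega>)) - cmi p M1 M2 C
           \<le> cmi p X1 X2 (\<lambda>\<omega>. (D \<omega>, C \<omega>)) - cmi p X1 X2 C"
proof -
  let ?H = "\<lambda>F. pmf_entropy (map_pmf F p)"
  have "0 \<le> cmi p M1 D (\<lambda>\<omega>. (X1 \<omega>, C \<omega>))" "0 \<le> cmi p M2 D (\<lambda>\<omega>. (X2 \<omega>, C \<omega>))"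
    using fin by (simp_all add: cmi_nonneg)
  moreover have
    "?H (\<lambda>\<omega>. (M1 \<omega>, X1 \<omega>, C \<omega>)) = ?H (\<lambda>\<omega>. (M1 \<omega>, C \<omega>))"
    "?H (\<lambda>\<omega>. (D \<omega>, X1 \<omega>, C \<omega>)) = ?H (\<lambda>\<omega>. (X1 \<omega>, D \<omega>, C \<omega>))"
    "?H (\<lambda>\<omega>. (M1 \<omega>, D \<omega>, X1 \<omega>, C \<omega>)) = ?H (\<lambda>\<omega>. (M1 \<omega>, D \<omega>, C \<omega>))"
    "?H (\<lambda>\<omega>. (M2 \<omega>, X2 \<omega>, C \<omega>)) = ?H (\<lambda>\<omega>. (M2 \<omega>, C \<omega>))"
    "?H (\<lambda>\<omega>. (D \<omega>, X2 \<omega>, C \<omega>)) = ?H (\<lambda>\<omega>. (X2 \<omega>, D \<omega>, C \<omega>))"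
    "?H (\<lambda>\<omega>. (M2 \<omega>, D \<omega>, X2 \<omega>, C \<omega>)) = ?H (\<lambda>\<omega>. (M2 \<omega>, D \<omega>, C \<omega>))"
    by (rule pmf_entropy_map_cong_fibres, auto dest!: enc)+
  ultimately show ?thesis
    using Markov by (simp add: cmi_eq_entropies[OF fin])
qed

section \<open>Transmission with generalized feedback\<close>

lemma finite_set_pmf_traj:
  fixes PS :: "'s::finite pmf" and ch :: "'x1 \<Rightarrow> 'x2 \<Rightarrow> 's \<Rightarrow> ('y::finite \<times> 'z1::finite \<times> 'z2::finite) pmf"
  shows "finite (set_pmf (traj PS ch \<phi>1 \<phi>2 w1 w2 k))"
  by (induction k) (simp_all add: Let_def)

lemma set_pmf_traj_encoders:
  assumes "h \<in> set_pmf (traj PS ch \<phi>1 \<phi>2 w1 w2 k)"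
  shows "length h = k \<and> (\<forall>i<k. st_x1 (h ! i) = \<phi>1 i w1 (map st_z1 (take i h))
                              \<and> st_x2 (h ! i) = \<phi>2 i w2 (map st_z2 (take i h)))"
  using assms
proof (induction k arbitrary: h)
  case 0
  then show ?case by simp
next
  case (Suc k)
  then obtain h0 s y z1 z2 where h0: "h0 \<in> set_pmf (traj PS ch \<phi>1 \<phi>2 w1 w2 k)"
    and h: "h = h0 @ [(\<phi>1 k w1 (map st_z1 h0), \<phi>2 k w2 (map st_z2 h0), s, y, z1, z2)]"
    by (auto simp: Let_def)
  from Suc.IH[OF h0] show ?case
    by (auto simp: h nth_append st_x1_def st_x2_def less_Suc_eq)
qed

lemma map_pmf_take_traj:
  "k \<le> m \<Longrightarrow> map_pmf (take k) (traj PS ch \<phi>1 \<phi>2 w1 w2 m) = traj PS ch \<phi>1 \<phi>2 w1 w2 k"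
proof (induction m)
  case 0
  then show ?case by simp
next
  case (Suc m)
  show ?case
  proof (cases "k = Suc m")
    case True
    then have "map_pmf (take k) (traj PS ch \<phi>1 \<phi>2 w1 w2 (Suc m)) = map_pmf id (traj PS ch \<phi>1 \<phi>2 w1 w2 (Suc m))"
      using set_pmf_traj_encoders[of _ PS ch \<phi>1 \<phi>2 w1 w2 "Suc m"] by (intro map_pmf_cong) auto
    then show ?thesis
      using True by simp
  next
    case False
    then have k: "k \<le> m"
      using Suc.prems by simp
    have "map_pmf (take k) (traj PS ch \<phi>1 \<phi>2 w1 w2 (Suc m))
        = bind_pmf (traj PS ch \<phi>1 \<phi>2 w1 w2 m) (\<lambda>h. bind_pmf PS (\<lambda>s. return_pmf (take k h)))"
      unfolding traj.simps map_bind_pmf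
      using k by (intro bind_pmf_cong refl)
        (auto simp: Let_def map_bind_pmf map_pmf_comp split_beta dest!: set_pmf_traj_encoders intro!: bind_pmf_cong)
    also have "\<dots> = map_pmf (take k) (traj PS ch \<phi>1 \<phi>2 w1 w2 m)"
      by (simp add: map_pmf_def)
    finally show ?thesis
      using Suc.IH k by simp
  qed
qed

lemma finite_set_pmf_code_pmf:
  fixes PS :: "'s::finite pmf" and ch :: "'x1 \<Rightarrow> 'x2 \<Rightarrow> 's \<Rightarrow> ('y::finite \<times> 'z1::finite \<times> 'z2::finite) pmf"
  assumes "finite W1" "W1 \<noteq> {}" "finite W2" "W2 \<noteq> {}"
  shows "finite (set_pmf (code_pmf W1 W2 PS ch \<phi>1 \<phi>2 n))"
  using assms by (simp add: code_pmf_def finite_set_pmf_traj)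

lemma map_pmf_take_code_pmf:
  "k \<le> n \<Longrightarrow> map_pmf (\<lambda>(w1, w2, h). (w1, w2, take k h)) (code_pmf W1 W2 PS ch \<phi>1 \<phi>2 n)
     = code_pmf W1 W2 PS ch \<phi>1 \<phi>2 k"
  unfolding code_pmf_def map_bind_pmf map_pmf_comp
  by (intro bind_pmf_cong refl) (simp add: map_pmf_take_traj[symmetric] map_pmf_comp)

lemma code_pmf_encoders:
  assumes "i < n" and "\<omega> \<in> set_pmf (code_pmf W1 W2 PS ch \<phi>1 \<phi>2 n)"
  shows "rvX1 i \<omega> = \<phi>1 i (fst \<omega>) (map fst (rvZpast i \<omega>))"
    and "rvX2 i \<omega> = \<phi>2 i (fst (snd \<omega>)) (map snd (rvZpast i \<omega>))"
    and "rvZpast (Suc i) \<omega> = rvZpast i \<omega> @ [rvZ i \<omega>]"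
proof -
  obtain w1 w2 h where \<omega>: "\<omega> = (w1, w2, h)" and "h \<in> set_pmf (traj PS ch \<phi>1 \<phi>2 w1 w2 n)"
    using assms(2) by (auto simp: code_pmf_def)
  note h = set_pmf_traj_encoders[OF this(2)]
  show "rvX1 i \<omega> = \<phi>1 i (fst \<omega>) (map fst (rvZpast i \<omega>))"
    "rvX2 i \<omega> = \<phi>2 i (fst (snd \<omega>)) (map snd (rvZpast i \<omega>))"
    "rvZpast (Suc i) \<omega> = rvZpast i \<omega> @ [rvZ i \<omega>]"
    using h assms(1) by (auto simp: \<omega> rvZpast_def rvZ_def rvX1_def rvX2_def take_Suc_conv_app_nth o_def)
qed

definition feedback_kernel :: "'s pmf \<Rightarrow> ('x1 \<Rightarrow> 'x2 \<Rightarrow> 's \<Rightarrow> ('y \<times> 'z1 \<times> 'z2) pmf)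
    \<Rightarrow> 'x1 \<Rightarrow> 'x2 \<Rightarrow> ('z1 \<times> 'z2) pmf" where
  "feedback_kernel PS ch x1 x2 = bind_pmf PS (\<lambda>s. map_pmf (\<lambda>(y, z1, z2). (z1, z2)) (ch x1 x2 s))"

lemma code_pmf_feedback_given_past:
  assumes i: "i < n"
  shows "map_pmf (\<lambda>\<omega>. ((fst \<omega>, fst (snd \<omega>), rvZpast i \<omega>), rvZ i \<omega>)) (code_pmf W1 W2 PS ch \<phi>1 \<phi>2 n)
    = bind_pmf (map_pmf (\<lambda>\<omega>. (fst \<omega>, fst (snd \<omega>), rvZpast i \<omega>)) (code_pmf W1 W2 PS ch \<phi>1 \<phi>2 n))
        (\<lambda>(w1, w2, c). map_pmf (Pair (w1, w2, c))
           (feedback_kernel PS ch (\<phi>1 i w1 (map fst c)) (\<phi>2 i w2 (map snd c))))"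
proof -
  let ?P = "code_pmf W1 W2 PS ch \<phi>1 \<phi>2"
  \<comment> \<open>Truncating to block length \<open>i + 1\<close> reduces the claim to the last step of \<open>traj\<close>.\<close>
  have joint: "map_pmf (\<lambda>\<omega>. ((fst \<omega>, fst (snd \<omega>), rvZpast i \<omega>), rvZ i \<omega>)) (?P n)
      = map_pmf (\<lambda>\<omega>. ((fst \<omega>, fst (snd \<omega>), rvZpast i \<omega>), rvZ i \<omega>)) (?P (Suc i))"
    unfolding map_pmf_take_code_pmf[OF Suc_leI[OF i], symmetric] map_pmf_comp
    by (intro map_pmf_cong refl) (auto simp: rvZpast_def rvZ_def)
  have past: "map_pmf (\<lambda>\<omega>. (fst \<omega>, fst (snd \<omega>), rvZpast i \<omega>)) (?P n)
      = map_pmf (\<lambda>\<omega>. (fst \<omega>, fst (snd \<omega>), rvZpast i \<omega>)) (?P i)"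
    unfolding map_pmf_take_code_pmf[OF less_imp_le[OF i], symmetric] map_pmf_comp
    by (intro map_pmf_cong refl) (auto simp: rvZpast_def)
  show ?thesis
    unfolding joint past
    unfolding code_pmf_def traj.simps map_bind_pmf bind_map_pmf map_pmf_comp bind_assoc_pmf
    by (intro bind_pmf_cong refl) (drule set_pmf_traj_encoders,
      simp add: Let_def map_bind_pmf bind_map_pmf map_pmf_comp feedback_kernel_def split_beta
        rvZpast_def rvZ_def o_def nth_append st_z1_def[abs_def] st_z2_def[abs_def])
qed

lemma code_pmf_Markov_entropy:
  fixes PS :: "'s::finite pmf"
    and ch :: "'x1 \<Rightarrow> 'x2 \<Rightarrow> 's \<Rightarrow> ('y::finite \<times> 'z1::finite \<times> 'z2::finite) pmf"
    and \<phi>1 :: "nat \<Rightarrow> 'w1 \<Rightarrow> 'z1 list \<Rightarrow> 'x1" and \<phi>2 :: "nat \<Rightarrow> 'w2 \<Rightarrow> 'z2 list \<Rightarrow> 'x2"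
  assumes W: "finite W1" "W1 \<noteq> {}" "finite W2" "W2 \<noteq> {}" and i: "i < n"
  defines "P \<equiv> code_pmf W1 W2 PS ch \<phi>1 \<phi>2 n"
  shows "pmf_entropy (map_pmf (\<lambda>\<omega>. (fst \<omega>, fst (snd \<omega>), rvZ i \<omega>, rvZpast i \<omega>)) P)
           - pmf_entropy (map_pmf (\<lambda>\<omega>. (fst \<omega>, fst (snd \<omega>), rvZpast i \<omega>)) P)
         = pmf_entropy (map_pmf (\<lambda>\<omega>. (rvX1 i \<omega>, rvX2 i \<omega>, rvZ i \<omega>, rvZpast i \<omega>)) P)
           - pmf_entropy (map_pmf (\<lambda>\<omega>. (rvX1 i \<omega>, rvX2 i \<omega>, rvZpast i \<omega>)) P)"
proof -
  let ?H = "\<lambda>F. pmf_entropy (map_pmf F P)"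
  define A :: "'w1 \<times> 'w2 \<times> ('x1, 'x2, 's, 'y, 'z1, 'z2) step list \<Rightarrow> _"
    where "A = (\<lambda>\<omega>. (fst \<omega>, fst (snd \<omega>), rvZpast i \<omega>))"
  define h where "h = (\<lambda>(w1, w2, c). (\<phi>1 i w1 (map fst c), \<phi>2 i w2 (map snd c), c))"
  define L where "L = (\<lambda>(x1, x2, c :: ('z1 \<times> 'z2) list). feedback_kernel PS ch x1 x2)"
  have fin: "finite (set_pmf (map_pmf A P))"
    unfolding P_def using finite_set_pmf_code_pmf[OF W, of PS ch \<phi>1 \<phi>2 n] by simp
  have joint: "map_pmf (\<lambda>\<omega>. (A \<omega>, rvZ i \<omega>)) P = bind_pmf (map_pmf A P) (\<lambda>a. map_pmf (Pair a) (L (h a)))"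
    unfolding P_def A_def code_pmf_feedback_given_past[OF i]
    by (auto simp: h_def L_def intro!: bind_pmf_cong)
  have "?H (\<lambda>\<omega>. (A \<omega>, rvZ i \<omega>)) - ?H A = ?H (\<lambda>\<omega>. (h (A \<omega>), rvZ i \<omega>)) - ?H (\<lambda>\<omega>. h (A \<omega>))"
    using pmf_entropy_Markov[OF fin, of L h] unfolding joint[symmetric] by (simp add: map_pmf_comp L_def)
  moreover have hA: "h (A \<omega>) = (rvX1 i \<omega>, rvX2 i \<omega>, rvZpast i \<omega>)" if "\<omega> \<in> set_pmf P" for \<omega>
    using code_pmf_encoders[OF i that[unfolded P_def]] by (simp add: h_def A_def)
  moreover have "?H (\<lambda>\<omega>. (A \<omega>, rvZ i \<omega>)) = ?H (\<lambda>\<omega>. (fst \<omega>, fst (snd \<omega>), rvZ i \<omega>, rvZpast i \<omega>))"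
    by (rule pmf_entropy_map_cong_fibres) (auto simp: A_def)
  moreover have "?H (\<lambda>\<omega>. (h (A \<omega>), rvZ i \<omega>)) = ?H (\<lambda>\<omega>. (rvX1 i \<omega>, rvX2 i \<omega>, rvZ i \<omega>, rvZpast i \<omega>))"
    by (rule pmf_entropy_map_cong_fibres) (auto simp: hA)
  moreover have "map_pmf (\<lambda>\<omega>. h (A \<omega>)) P = map_pmf (\<lambda>\<omega>. (rvX1 i \<omega>, rvX2 i \<omega>, rvZpast i \<omega>)) P"
    by (rule map_pmf_cong) (simp_all add: hA)
  ultimately show ?thesis
    by (simp add: A_def)
qed

lemma code_pmf_messages:
  "map_pmf (\<lambda>\<omega>. (fst \<omega>, fst (snd \<omega>))) (code_pmf W1 W2 PS ch \<phi>1 \<phi>2 n)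
     = pair_pmf (pmf_of_set W1) (pmf_of_set W2)"
  by (simp add: code_pmf_def pair_pmf_def map_bind_pmf map_pmf_comp map_pmf_def[symmetric])

lemma code_pmf_message_cmi_initial:
  fixes PS :: "'s::finite pmf"
    and ch :: "'x1 \<Rightarrow> 'x2 \<Rightarrow> 's \<Rightarrow> ('y::finite \<times> 'z1::finite \<times> 'z2::finite) pmf"
    and \<phi>1 :: "nat \<Rightarrow> 'w1 \<Rightarrow> 'z1 list \<Rightarrow> 'x1" and \<phi>2 :: "nat \<Rightarrow> 'w2 \<Rightarrow> 'z2 list \<Rightarrow> 'x2"
    and n :: nat
  assumes W: "finite W1" "W1 \<noteq> {}" "finite W2" "W2 \<noteq> {}"
  defines "P \<equiv> code_pmf W1 W2 PS ch \<phi>1 \<phi>2 n"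
  shows "cmi P fst (\<lambda>\<omega>. fst (snd \<omega>)) (rvZpast 0) = 0"
proof -
  have messages: "map_pmf (\<lambda>\<omega>. (fst \<omega>, fst (snd \<omega>))) P = pair_pmf (pmf_of_set W1) (pmf_of_set W2)"
    unfolding P_def by (rule code_pmf_messages)
  have "map_pmf fst P = pmf_of_set W1" "map_pmf (\<lambda>\<omega>. fst (snd \<omega>)) P = pmf_of_set W2"
    using arg_cong[OF messages, of "map_pmf fst"] arg_cong[OF messages, of "map_pmf snd"]
    by (simp_all add: map_pmf_comp map_fst_pair_pmf map_snd_pair_pmf)
  with messages show ?thesis
    unfolding P_def using finite_set_pmf_code_pmf[OF W]
    by (intro cmi_independent_const_eq_0[where c = "[]"]) (simp_all add: rvZpast_def)
qed

lemma code_pmf_message_cmi_increment_le: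
  fixes PS :: "'s::finite pmf"
    and ch :: "'x1 \<Rightarrow> 'x2 \<Rightarrow> 's \<Rightarrow> ('y::finite \<times> 'z1::finite \<times> 'z2::finite) pmf"
    and \<phi>1 :: "nat \<Rightarrow> 'w1 \<Rightarrow> 'z1 list \<Rightarrow> 'x1" and \<phi>2 :: "nat \<Rightarrow> 'w2 \<Rightarrow> 'z2 list \<Rightarrow> 'x2"
  assumes W: "finite W1" "W1 \<noteq> {}" "finite W2" "W2 \<noteq> {}" and i: "i < n"
  defines "P \<equiv> code_pmf W1 W2 PS ch \<phi>1 \<phi>2 n"
  shows "cmi P fst (\<lambda>\<omega>. fst (snd \<omega>)) (rvZpast (Suc i)) - cmi P fst (\<lambda>\<omega>. fst (snd \<omega>)) (rvZpast i)
     \<le> cmi P (rvX1 i) (rvX2 i) (\<lambda>\<omega>. (rvZ i \<omega>, rvZpast i \<omega>)) - cmi P (rvX1 i) (rvX2 i) (rvZpast i)"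
proof -
  have fin: "finite (set_pmf P)"
    unfolding P_def by (rule finite_set_pmf_code_pmf[OF W])
  note enc = code_pmf_encoders[OF i, of _ W1 W2 PS ch \<phi>1 \<phi>2, folded P_def]
  note Markov = code_pmf_Markov_entropy[OF W i, of PS ch \<phi>1 \<phi>2, folded P_def]
  have "cmi P fst (\<lambda>\<omega>. fst (snd \<omega>)) (rvZpast (Suc i))
      = cmi P fst (\<lambda>\<omega>. fst (snd \<omega>)) (\<lambda>\<omega>. (rvZ i \<omega>, rvZpast i \<omega>))"
    by (rule cmi_cong_fibres[OF fin]) (auto simp: enc(3))
  also have "\<dots> - cmi P fst (\<lambda>\<omega>. fst (snd \<omega>)) (rvZpast i)
      \<le> cmi P (rvX1 i) (rvX2 i) (\<lambda>\<omega>. (rvZ i \<omega>, rvZpast i \<omega>)) - cmi P (rvX1 i) (rvX2 i) (rvZpast i)"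
    by (rule cmi_increment_le_of_encoders[where f = "\<lambda>w c. \<phi>1 i w (map fst c)"
          and g = "\<lambda>w c. \<phi>2 i w (map snd c)", OF fin])
      (simp_all add: enc Markov)
  finally show ?thesis .
qed

theorem mainTheorem4:
  fixes W1 :: "'w1 set" and W2 :: "'w2 set"
    and PS :: "'s::finite pmf"
    and ch :: "'x1::finite \<Rightarrow> 'x2::finite \<Rightarrow> 's \<Rightarrow> ('y::finite \<times> 'z1::finite \<times> 'z2::finite) pmf"
    and \<phi>1 :: "nat \<Rightarrow> 'w1 \<Rightarrow> 'z1 list \<Rightarrow> 'x1"
    and \<phi>2 :: "nat \<Rightarrow> 'w2 \<Rightarrow> 'z2 list \<Rightarrow> 'x2"
    and n :: nat
  assumes "finite W1" "W1 \<noteq> {}" "finite W2" "W2 \<noteq> {}"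
  defines "P \<equiv> code_pmf W1 W2 PS ch \<phi>1 \<phi>2 n"
  shows "(\<Sum>i<n. cmi P (rvX1 i) (rvX2 i) (rvZpast i))
           \<le> (\<Sum>i<n. cmi P (rvX1 i) (rvX2 i) (\<lambda>\<omega>. (rvZ i \<omega>, rvZpast i \<omega>)))"
proof -
  note W = assms(1-4)
  have fin: "finite (set_pmf P)"
    unfolding P_def by (rule finite_set_pmf_code_pmf[OF W])
  define a where "a k = cmi P fst (\<lambda>\<omega>. fst (snd \<omega>)) (rvZpast k)" for k
  have "a n - a 0 = (\<Sum>i<n. a (Suc i) - a i)"
    by (simp add: sum_lessThan_telescope)
  also have "\<dots> \<le> (\<Sum>i<n. cmi P (rvX1 i) (rvX2 i) (\<lambda>\<omega>. (rvZ i \<omega>, rvZpast i \<omega>))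
      - cmi P (rvX1 i) (rvX2 i) (rvZpast i))"
    unfolding a_def P_def using W by (intro sum_mono code_pmf_message_cmi_increment_le) auto
  finally have "a n - a 0 \<le> \<dots>" .
  moreover have "a 0 = 0"
    unfolding a_def P_def using W by (rule code_pmf_message_cmi_initial)
  moreover have "0 \<le> a n"
    unfolding a_def using fin by (rule cmi_nonneg)
  ultimately show ?thesis
    by (simp add: sum_subtractf)
qed

end
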